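(* For all $n\ge2$ and $m\ge1$, the cardinality sensitivity of affine maximizers for $n$ players and $m$ items satisfies $\mu_c(n,m)\le\lceil m/2\rceil$.
   Context: Players $[n]$, items $[m]$, allocations $\Omega=\{A\in\{0,1\}^{n\times m}:\sum_iA_{i,j}=1\ \forall j\}$; $A_i\in\{0,1\}^m$ denotes the bundle (row) of player $i$. An affine maximizer is $f:\mathbb R^{n\times m}\to\Omega$ with $f(\theta)\in\arg\max_{A\in\Omega}\{c_A+\sum_iw_i\theta_i\cdot A_i\}$ for nonzero weights $w_i$ and reals $c_A$. Difference sets $Q_A=\mathrm{cl}\{\theta:f(\theta)=A\}$; indifference complex $\mathcal I(f)=\{\mathcal O\subseteq\Omega:\bigcap_{A\in\mathcal O}Q_A\ne\emptyset\}$. Let $\Psi_{(n,m)}$ be the set of indifference complexes of affine maximizers. With $\mathrm{Cd}(a,b)=\big||a|_1-|b|_1\big|$, define $\mu_c(n,m)=\min_{\mathcal I\in\Psi_{(n,m)}}\max\{\mathrm{Cd}(A_i,B_i): A,B\in F\text{ for some }F\in\mathcal I,\ i\in[n]\}$. *)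

theory Defs
  imports "HOL-Analysis.Analysis"
begin

text \<open>Players are the finite type 'n, items the finite type 'm; a valuation profile
  theta and an allocation A are n x m real matrices (real^'m^'n), row i = player i.\<close>

definition allocations :: "(real^'m::finite^'n::finite) set" where
  "allocations = {A. (\<forall>i j. A$i$j \<in> {0,1}) \<and> (\<forall>j. (\<Sum>i\<in>UNIV. A$i$j) = 1)}"

definition affine_maximizer :: "(real^'m::finite^'n::finite \<Rightarrow> real^'m^'n) \<Rightarrow> bool" where
  "affine_maximizer f \<longleftrightarrow> (\<exists>(w::'n \<Rightarrow> real) (c::real^'m^'n \<Rightarrow> real).
     (\<forall>i. w i \<noteq> 0) \<and>
     (\<forall>\<theta>. f \<theta> \<in> allocations \<and>
        (\<forall>B\<in>allocations. c B + (\<Sum>i\<in>UNIV. w i * (\<theta>$i \<bullet> B$i))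
            \<le> c (f \<theta>) + (\<Sum>i\<in>UNIV. w i * (\<theta>$i \<bullet> (f \<theta>)$i)))))"

definition difference_set :: "(real^'m::finite^'n::finite \<Rightarrow> real^'m^'n) \<Rightarrow> real^'m^'n \<Rightarrow> (real^'m^'n) set" where
  "difference_set f A = closure {\<theta>. f \<theta> = A}"

definition indifference_complex :: "(real^'m::finite^'n::finite \<Rightarrow> real^'m^'n) \<Rightarrow> (real^'m^'n) set set" where
  "indifference_complex f = {S. S \<subseteq> allocations \<and> (\<Inter>A\<in>S. difference_set f A) \<noteq> {}}"

definition Psi :: "(real^'m::finite^'n::finite) set set set" where
  "Psi = {indifference_complex f | f. affine_maximizer f}"

definition l1 :: "real^'m::finite \<Rightarrow> real" where
  "l1 a = (\<Sum>j\<in>UNIV. \<bar>a$j\<bar>)"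

definition Cd :: "real^'m::finite \<Rightarrow> real^'m \<Rightarrow> real" where
  "Cd a b = \<bar>l1 a - l1 b\<bar>"

definition card_sens :: "(real^'m::finite^'n::finite) set set \<Rightarrow> real" where
  "card_sens I = Max {Cd (A$i) (B$i) | A B i. \<exists>F\<in>I. A \<in> F \<and> B \<in> F}"

definition mu_c :: "'n::finite itself \<Rightarrow> 'm::finite itself \<Rightarrow> real" where
  "mu_c _ _ = Min (card_sens ` (Psi :: (real^'m^'n) set set set))"

end

theory Submission
  imports Defs
begin

text \<open>Take the affine maximizer with unit weights and the concave size penalty
  \<open>c\<^sub>A = -\<Sum>\<^sub>i |A\<^sub>i|\<^sup>2\<close>.  Let \<open>A\<close> and \<open>B\<close> both be optimal at some \<open>\<theta>\<close> and
  \<open>|A\<^sub>p| > |B\<^sub>p|\<close>; pick an item \<open>j\<close> that \<open>p\<close> gets in \<open>A\<close> but \<open>q \<noteq> p\<close> gets in \<open>B\<close>.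
  Moving \<open>j\<close> from \<open>p\<close> to \<open>q\<close> in \<open>A\<close> and from \<open>q\<close> to \<open>p\<close> in \<open>B\<close> cannot increase the
  objective; adding the two inequalities cancels the valuations and leaves
  \<open>(|A\<^sub>p| - |B\<^sub>p|) - (|A\<^sub>q| - |B\<^sub>q|) \<le> 2\<close>.  Since \<open>|A\<^sub>p| + |A\<^sub>q| \<le> m\<close> and \<open>|B\<^sub>q| \<ge> 1\<close>, this
  gives \<open>2(|A\<^sub>p| - |B\<^sub>p|) \<le> m + 1\<close>, i.e. \<open>|A\<^sub>p| - |B\<^sub>p| \<le> \<lceil>m/2\<rceil>\<close> by integrality.\<close>

lemma allocation_entry_cases: "A \<in> allocations \<Longrightarrow> A$i$j = 0 \<or> A$i$j = 1"
  by (auto simp: allocations_def)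

lemma allocation_entry_nonneg: "A \<in> allocations \<Longrightarrow> A$i$j \<ge> 0"
  using allocation_entry_cases[of A i j] by auto

lemma allocation_column_sum: "A \<in> allocations \<Longrightarrow> (\<Sum>i\<in>UNIV. A$i$j) = 1"
  by (auto simp: allocations_def)

lemma allocation_owner_exists:
  assumes A: "A \<in> allocations" shows "\<exists>q. A$q$j = 1"
proof (rule ccontr)
  assume "\<not> ?thesis"
  then have "\<forall>q. A$q$j = 0" using allocation_entry_cases[OF A] by blast
  then show False using allocation_column_sum[OF A, of j] by simp
qed

lemma allocation_owner_unique:
  assumes A: "A \<in> allocations" and "A$p$j = 1" and "i \<noteq> p"
  shows "A$i$j = 0"
proof -
  have "(\<Sum>i\<in>UNIV. A$i$j) = A$p$j + (\<Sum>i\<in>UNIV-{p}. A$i$j)"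
    by (simp add: sum.remove)
  then have "(\<Sum>i\<in>UNIV-{p}. A$i$j) = 0"
    using allocation_column_sum[OF A] assms(2) by simp
  then show ?thesis
    using assms(3) by (subst (asm) sum_nonneg_eq_0_iff) (auto intro: allocation_entry_nonneg[OF A])
qed

lemma allocation_column_weighted_sum:
  assumes "A \<in> allocations" and "A$p$j = 1"
  shows "(\<Sum>i\<in>UNIV. g i * A$i$j) = g p"
proof -
  have "(\<Sum>i\<in>UNIV. g i * A$i$j) = (\<Sum>i\<in>UNIV. if i = p then g i else 0)"
    by (rule sum.cong) (use allocation_owner_unique[OF assms] assms(2) in auto)
  then show ?thesis by simp
qed

lemma allocations_nonempty: "allocations \<noteq> {}"
proof -
  have "(\<chi> i k. if i = p then 1 else 0) \<in> allocations" for p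
    by (auto simp: allocations_def)
  then show ?thesis by blast
qed

lemma finite_allocations: "finite (allocations :: (real^'m::finite^'n::finite) set)"
proof -
  let ?G = "PiE (UNIV :: 'n set) (\<lambda>_. PiE (UNIV :: 'm set) (\<lambda>_. {0::real, 1}))"
  have "allocations \<subseteq> (\<lambda>g. \<chi> i k. g i k) ` ?G"
  proof
    fix A :: "real^'m^'n" assume "A \<in> allocations"
    then have "(\<lambda>i k. A$i$k) \<in> ?G" by (auto simp: allocations_def)
    then show "A \<in> (\<lambda>g. \<chi> i k. g i k) ` ?G"
      by (rule rev_image_eqI) (simp add: vec_eq_iff)
  qed
  moreover have "finite ?G" by (intro finite_PiE) auto
  ultimately show ?thesis by (meson finite_imageI finite_subset)
qed

definition bundle_size :: "real^'m::finite^'n::finite \<Rightarrow> 'n \<Rightarrow> real" where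
  "bundle_size X i = (\<Sum>k\<in>UNIV. X$i$k)"

lemma l1_allocation_row: "A \<in> allocations \<Longrightarrow> l1 (A$i) = bundle_size A i"
  unfolding l1_def bundle_size_def by (intro sum.cong) (auto simp: allocation_entry_nonneg)

lemma bundle_size_Ints: "A \<in> allocations \<Longrightarrow> bundle_size A i \<in> \<int>"
  unfolding bundle_size_def
  by (rule Ints_sum) (use allocation_entry_cases in \<open>metis Ints_0 Ints_1\<close>)

lemma bundle_size_nonneg: "A \<in> allocations \<Longrightarrow> bundle_size A i \<ge> 0"
  unfolding bundle_size_def by (rule sum_nonneg) (use allocation_entry_nonneg in auto)

lemma bundle_size_ge_1: "A \<in> allocations \<Longrightarrow> A$i$j = 1 \<Longrightarrow> bundle_size A i \<ge> 1"
  unfolding bundle_size_def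
  using member_le_sum[of j UNIV "\<lambda>k. A$i$k"] allocation_entry_nonneg by fastforce

lemma bundle_size_two_players:
  fixes A :: "real^'m::finite^'n::finite"
  assumes A: "A \<in> allocations" and "p \<noteq> q"
  shows "bundle_size A p + bundle_size A q \<le> real CARD('m)"
proof -
  have "A$p$k + A$q$k \<le> 1" for k
  proof -
    have "A$p$k + A$q$k = (\<Sum>i\<in>{p,q}. A$i$k)" using assms(2) by simp
    also have "\<dots> \<le> (\<Sum>i\<in>UNIV. A$i$k)"
      by (rule sum_mono2) (auto intro: allocation_entry_nonneg[OF A])
    finally show ?thesis using allocation_column_sum[OF A] by simp
  qed
  then have "(\<Sum>k\<in>UNIV. A$p$k + A$q$k) \<le> (\<Sum>k\<in>(UNIV::'m set). 1)"
    by (intro sum_mono) simp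
  then show ?thesis by (simp add: bundle_size_def sum.distrib)
qed

definition reassign :: "real^'m::finite^'n::finite \<Rightarrow> 'm \<Rightarrow> 'n \<Rightarrow> real^'m^'n" where
  "reassign X j q = (\<chi> i k. if k = j then (if i = q then 1 else 0) else X$i$k)"

lemma reassign_in_allocations: "A \<in> allocations \<Longrightarrow> reassign A j q \<in> allocations"
  unfolding allocations_def reassign_def
proof safe
  fix i k assume "\<forall>i j. A$i$j \<in> {0, 1}"
    and "(\<chi> i k. if k = j then if i = q then 1 else 0 else A$i$k) $ i $ k \<noteq> 0"
  then show "(\<chi> i k. if k = j then if i = q then 1 else 0 else A$i$k) $ i $ k = 1"
    by (auto; metis)
next
  fix k assume "\<forall>j. (\<Sum>i\<in>UNIV. A$i$j) = 1"
  then show "(\<Sum>i\<in>UNIV. (\<chi> i k. if k = j then if i = q then 1 else 0 else A$i$k) $ i $ k) = 1"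
    by (cases "k = j") auto
qed

lemma sum_mult_update:
  fixes f y :: "'a::finite \<Rightarrow> real"
  shows "(\<Sum>k\<in>UNIV. f k * (if k = j then e else y k)) = (\<Sum>k\<in>UNIV. f k * y k) + f j * (e - y j)"
proof -
  have "(\<Sum>k\<in>UNIV. f k * (if k = j then e else y k))
      = (\<Sum>k\<in>UNIV. f k * y k + (if k = j then f j * (e - y j) else 0))"
    by (rule sum.cong) (auto simp: algebra_simps)
  then show ?thesis by (simp add: sum.distrib)
qed

lemma inner_reassign:
  assumes "A \<in> allocations" and "A$p$j = 1"
  shows "t \<bullet> reassign A j q = t \<bullet> A - t$p$j + t$q$j"
proof -
  have row: "t$i \<bullet> reassign A j q $ i = t$i \<bullet> A$i + t$i$j * ((if i = q then 1 else 0) - A$i$j)" for i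
    using sum_mult_update[of "\<lambda>k. t$i$k" j "if i = q then 1 else 0" "\<lambda>k. A$i$k"]
    by (simp add: inner_vec_def reassign_def)
  have "(\<Sum>i\<in>UNIV. t$i$j * ((if i = q then 1 else 0) - A$i$j)) = t$q$j - t$p$j"
    using allocation_column_weighted_sum[OF assms, of "\<lambda>i. t$i$j"]
    by (simp add: right_diff_distrib sum_subtractf if_distrib[of "(*) _"])
  then show ?thesis
    by (simp add: inner_vec_def [of t] row sum.distrib)
qed

lemma bundle_size_reassign:
  assumes "A \<in> allocations" and "A$p$j = 1"
  shows "bundle_size (reassign A j q) i
           = bundle_size A i - (if i = p then 1 else 0) + (if i = q then 1 else 0)"
proof -
  have "bundle_size (reassign A j q) i = bundle_size A i + ((if i = q then 1 else 0) - A$i$j)"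
    using sum_mult_update[of "\<lambda>_. 1" j "if i = q then 1 else 0" "\<lambda>k. A$i$k"]
    by (simp add: bundle_size_def reassign_def)
  moreover have "A$i$j = (if i = p then 1 else 0)"
    using allocation_owner_unique[OF assms, of i] assms(2) by auto
  ultimately show ?thesis by simp
qed

definition size_penalty :: "real^'m::finite^'n::finite \<Rightarrow> real" where
  "size_penalty X = (\<Sum>i\<in>UNIV. (bundle_size X i)\<^sup>2)"

lemma size_penalty_reassign:
  assumes "A \<in> allocations" and "A$p$j = 1" and "q \<noteq> p"
  shows "size_penalty (reassign A j q)
           = size_penalty A - 2 * bundle_size A p + 2 * bundle_size A q + 2"
proof -
  have "(bundle_size (reassign A j q) i)\<^sup>2 = (bundle_size A i)\<^sup>2
          + (if i = p then 1 - 2 * bundle_size A i else 0)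
          + (if i = q then 1 + 2 * bundle_size A i else 0)" for i
    unfolding bundle_size_reassign[OF assms(1,2)] using assms(3)
    by (cases "i = p"; cases "i = q") (auto simp: power2_eq_square algebra_simps)
  then show ?thesis by (simp add: size_penalty_def sum.distrib)
qed

definition penalized_welfare :: "real^'m::finite^'n::finite \<Rightarrow> real^'m^'n \<Rightarrow> real" where
  "penalized_welfare t X = t \<bullet> X - size_penalty X"

definition optimal_allocation :: "real^'m::finite^'n::finite \<Rightarrow> real^'m^'n \<Rightarrow> bool" where
  "optimal_allocation t X \<longleftrightarrow> X \<in> allocations
     \<and> (\<forall>C\<in>allocations. penalized_welfare t C \<le> penalized_welfare t X)"

lemma exchange_inequality:
  assumes A: "optimal_allocation t A" and B: "optimal_allocation t B"
    and "A$p$j = 1" and "B$q$j = 1" and "q \<noteq> p"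
  shows "(bundle_size A p - bundle_size B p) - (bundle_size A q - bundle_size B q) \<le> 2"
proof -
  have "A \<in> allocations" "B \<in> allocations"
    using A B by (auto simp: optimal_allocation_def)
  moreover have "penalized_welfare t (reassign A j q) \<le> penalized_welfare t A"
    and "penalized_welfare t (reassign B j p) \<le> penalized_welfare t B"
    using A B reassign_in_allocations unfolding optimal_allocation_def by blast+
  ultimately show ?thesis
    using assms(3-5)
    by (simp add: penalized_welfare_def inner_reassign size_penalty_reassign)
qed

lemma le_ceiling_half:
  assumes "d \<in> \<int>" and "2 * d \<le> real m + 1"
  shows "d \<le> of_int \<lceil>real m / 2\<rceil>"
proof -
  obtain k where k: "d = of_int k" using assms(1) Ints_cases by blast
  then have "of_int k - 1 < real m / 2" using assms(2) by simp
  then show ?thesis using k by (simp add: le_ceiling_iff)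
qed

lemma bundle_size_diff_le_ceiling_half:
  fixes A B :: "real^'m::finite^'n::finite"
  assumes A: "optimal_allocation t A" and B: "optimal_allocation t B"
  shows "bundle_size A p - bundle_size B p \<le> of_int \<lceil>real CARD('m) / 2\<rceil>"
proof (cases "bundle_size A p \<le> bundle_size B p")
  case True
  moreover have "(0::real) \<le> of_int \<lceil>real CARD('m) / 2\<rceil>" by simp
  ultimately show ?thesis by linarith
next
  case False
  have alloc: "A \<in> allocations" "B \<in> allocations"
    using A B by (auto simp: optimal_allocation_def)
  obtain j where "A$p$j > B$p$j"
    using False unfolding bundle_size_def by (meson not_le sum_mono)
  then have Apj: "A$p$j = 1" and Bpj: "B$p$j = 0"
    using allocation_entry_cases[OF alloc(1), of p j] allocation_entry_cases[OF alloc(2), of p j]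
    by auto
  obtain q where Bqj: "B$q$j = 1" using allocation_owner_exists[OF alloc(2)] by blast
  with Bpj have "q \<noteq> p" by auto
  have "2 * (bundle_size A p - bundle_size B p) \<le> real CARD('m) + 1"
    using exchange_inequality[OF A B Apj Bqj \<open>q \<noteq> p\<close>]
      bundle_size_two_players[OF alloc(1) \<open>q \<noteq> p\<close>[symmetric]]
      bundle_size_ge_1[OF alloc(2) Bqj] bundle_size_nonneg[OF alloc(2), of p]
    by (smt (verit))
  moreover have "bundle_size A p - bundle_size B p \<in> \<int>"
    using bundle_size_Ints[OF alloc(1)] bundle_size_Ints[OF alloc(2)] by (simp add: Ints_diff)
  ultimately show ?thesis by (rule le_ceiling_half[rotated])
qed

lemma Cd_optimal_allocations_le:
  fixes A B :: "real^'m::finite^'n::finite"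
  assumes "optimal_allocation t A" and "optimal_allocation t B"
  shows "Cd (A$i) (B$i) \<le> of_int \<lceil>real CARD('m) / 2\<rceil>"
  using assms bundle_size_diff_le_ceiling_half[OF assms, of i]
    bundle_size_diff_le_ceiling_half[OF assms(2,1), of i]
  by (simp add: Cd_def l1_allocation_row optimal_allocation_def)

lemma optimal_allocation_exists: "\<exists>A. optimal_allocation t A"
proof -
  let ?W = "penalized_welfare t ` allocations"
  have "finite ?W" "?W \<noteq> {}" using finite_allocations allocations_nonempty by auto
  then obtain A where "A \<in> allocations" "penalized_welfare t A = Max ?W"
    using Max_in by (metis imageE)
  with \<open>finite ?W\<close> show ?thesis by (auto simp: optimal_allocation_def)
qed

definition penalized_maximizer :: "real^'m::finite^'n::finite \<Rightarrow> real^'m^'n" where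
  "penalized_maximizer t = (SOME A. optimal_allocation t A)"

lemma optimal_penalized_maximizer: "optimal_allocation t (penalized_maximizer t)"
  unfolding penalized_maximizer_def by (rule someI_ex) (rule optimal_allocation_exists)

lemma affine_maximizer_penalized_maximizer: "affine_maximizer penalized_maximizer"
  unfolding affine_maximizer_def
proof (intro exI conjI allI)
  fix \<theta> :: "real^'m^'n"
  show "penalized_maximizer \<theta> \<in> allocations"
    using optimal_penalized_maximizer[of \<theta>] by (simp add: optimal_allocation_def)
  show "\<forall>B\<in>allocations. - size_penalty B + (\<Sum>i\<in>UNIV. 1 * (\<theta>$i \<bullet> B$i))
          \<le> - size_penalty (penalized_maximizer \<theta>)
             + (\<Sum>i\<in>UNIV. 1 * (\<theta>$i \<bullet> penalized_maximizer \<theta> $ i))"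
    using optimal_penalized_maximizer[of \<theta>]
    by (simp add: optimal_allocation_def penalized_welfare_def inner_vec_def)
qed simp

lemma optimal_on_difference_set:
  assumes "\<theta> \<in> difference_set penalized_maximizer A"
  shows "optimal_allocation \<theta> A"
proof -
  have "{t. \<forall>C\<in>allocations. penalized_welfare t C \<le> penalized_welfare t A}
      = (\<Inter>C\<in>allocations. {t. t \<bullet> C - size_penalty C \<le> t \<bullet> A - size_penalty A})"
    by (auto simp: penalized_welfare_def)
  moreover have "closed {t. t \<bullet> C - size_penalty C \<le> t \<bullet> A - size_penalty A}" for C
    by (intro closed_Collect_le continuous_intros)
  ultimately have "closed {t. \<forall>C\<in>allocations. penalized_welfare t C \<le> penalized_welfare t A}"
    by auto
  then have "closure {t. penalized_maximizer t = A}
      \<subseteq> {t. \<forall>C\<in>allocations. penalized_welfare t C \<le> penalized_welfare t A}"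
    using optimal_penalized_maximizer
    by (intro closure_minimal) (auto simp: optimal_allocation_def)
  moreover have "A \<in> allocations"
  proof -
    from assms obtain \<theta>' where "penalized_maximizer \<theta>' = A"
      by (force simp: difference_set_def)
    then show ?thesis using optimal_penalized_maximizer[of \<theta>'] by (simp add: optimal_allocation_def)
  qed
  ultimately show ?thesis
    using assms by (auto simp: difference_set_def optimal_allocation_def)
qed

lemma optimal_on_indifference_complex:
  assumes "F \<in> indifference_complex penalized_maximizer"
  obtains \<theta> where "\<And>A. A \<in> F \<Longrightarrow> optimal_allocation \<theta> A"
  using assms optimal_on_difference_set by (force simp: indifference_complex_def)

lemma singleton_in_indifference_complex:
  assumes "affine_maximizer f"
  shows "{f \<theta>} \<in> indifference_complex f"
  using assms closure_subset
  by (fastforce simp: affine_maximizer_def indifference_complex_def difference_set_def)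

lemma finite_Psi: "finite (Psi :: (real^'m::finite^'n::finite) set set set)"
proof -
  have "(Psi :: (real^'m^'n) set set set) \<subseteq> Pow (Pow allocations)"
    by (auto simp: Psi_def indifference_complex_def)
  then show ?thesis by (rule finite_subset) (simp add: finite_allocations)
qed

lemma mu_c_le_card_sens:
  fixes f :: "real^'m::finite^'n::finite \<Rightarrow> real^'m^'n"
  assumes "affine_maximizer f"
  shows "mu_c TYPE('n) TYPE('m) \<le> card_sens (indifference_complex f)"
  unfolding mu_c_def using finite_Psi assms by (intro Min_le) (auto simp: Psi_def)

lemma card_sens_le:
  fixes f :: "real^'m::finite^'n::finite \<Rightarrow> real^'m^'n"
  assumes f: "affine_maximizer f"
    and bound: "\<And>F A B i. F \<in> indifference_complex f \<Longrightarrow> A \<in> F \<Longrightarrow> B \<in> F \<Longrightarrow> Cd (A$i) (B$i) \<le> b"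
  shows "card_sens (indifference_complex f) \<le> b"
proof -
  let ?V = "{Cd (A$i) (B$i) | A B i. \<exists>F\<in>indifference_complex f. A \<in> F \<and> B \<in> F}"
  let ?Cd = "\<lambda>(A :: real^'m^'n, B, i :: 'n). Cd (A$i) (B$i)"
  have "?V \<subseteq> ?Cd ` (allocations \<times> allocations \<times> UNIV)"
  proof safe
    fix A B F and i :: 'n
    assume "F \<in> indifference_complex f" "A \<in> F" "B \<in> F"
    then have "(A, B, i) \<in> allocations \<times> allocations \<times> UNIV"
      by (auto simp: indifference_complex_def)
    then show "Cd (A$i) (B$i) \<in> ?Cd ` (allocations \<times> allocations \<times> UNIV)"
      by (rule rev_image_eqI) simp
  qed
  then have "finite ?V" by (rule finite_subset) (simp add: finite_allocations)
  moreover have "?V \<noteq> {}" using singleton_in_indifference_complex[OF f, of 0] by blast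
  ultimately show ?thesis using bound by (auto simp: card_sens_def Max_le_iff)
qed

theorem mainTheorem10:
  assumes "CARD('n::finite) \<ge> 2"
  shows "mu_c TYPE('n) TYPE('m::finite) \<le> of_int \<lceil>real CARD('m) / 2\<rceil>"
proof -
  have "card_sens (indifference_complex (penalized_maximizer :: real^'m^'n \<Rightarrow> _))
      \<le> of_int \<lceil>real CARD('m) / 2\<rceil>"
  proof (rule card_sens_le[OF affine_maximizer_penalized_maximizer])
    fix F and A B :: "real^'m^'n" and i
    assume "F \<in> indifference_complex penalized_maximizer" "A \<in> F" "B \<in> F"
    then obtain \<theta> where "optimal_allocation \<theta> A" "optimal_allocation \<theta> B"
      by (metis optimal_on_indifference_complex)
    then show "Cd (A$i) (B$i) \<le> of_int \<lceil>real CARD('m) / 2\<rceil>"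
      by (rule Cd_optimal_allocations_le)
  qed
  moreover have "mu_c TYPE('n) TYPE('m)
      \<le> card_sens (indifference_complex (penalized_maximizer :: real^'m^'n \<Rightarrow> _))"
    by (rule mu_c_le_card_sens) (rule affine_maximizer_penalized_maximizer)
  ultimately show ?thesis by linarith
qed

end
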